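(* Let $p\ge2$ and let $m_1,m_2$ be positive integers with $m_1\not\equiv m_2\pmod p$. Then for no width $d\ge1$ and no $W\in\mathbb{R}^{d\times p}$, $V\in\mathbb{R}^{p\times d}$ does the ReLU network $s^\theta(x)=V\,\mathrm{ReLU}(Wx)$ satisfy $h_\theta(x)=y(x)$ for all $x\in\mathcal{X}_{m_1}\cup\mathcal{X}_{m_2}$.
   Context: Let $[p]=\{0,1,\dots,p-1\}$ and, for an integer $m\ge1$, $\mathcal{X}_m=\{x\in\{0,1,\dots,m\}^p:\ \|x\|_1=m\}$, with coordinates of $x$ indexed by $[p]$. The label of $x$ is $y(x)=(\sum_{r\in[p]} r\,x_r)\bmod p\in[p]$. $\mathrm{ReLU}(t)=\max\{0,t\}$ is applied entrywise. For a score vector $s^\theta(x)\in\mathbb{R}^p$ with coordinates indexed by $[p]$, the predictor is $h_\theta(x)=\ell$ if $s^\theta_\ell(x)>s^\theta_k(x)$ for all $k\ne\ell$, and $h_\theta(x)=\bot$ (invalid, never equal to a label) otherwise. *)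

theory Defs
  imports Complex_Main
begin

text \<open>Inputs: x is represented as a function nat => nat, with coordinates indexed by [p] = {0..<p}
  and x r = 0 for r >= p (canonical representative).\<close>

definition X_set :: "nat \<Rightarrow> nat \<Rightarrow> (nat \<Rightarrow> nat) set" where
  "X_set p m = {x. (\<forall>r. r \<ge> p \<longrightarrow> x r = 0) \<and> (\<forall>r<p. x r \<le> m) \<and> (\<Sum>r<p. x r) = m}"

definition label :: "nat \<Rightarrow> (nat \<Rightarrow> nat) \<Rightarrow> nat" where
  "label p x = (\<Sum>r<p. r * x r) mod p"

definition relu :: "real \<Rightarrow> real" where
  "relu t = max 0 t"

definition score :: "nat \<Rightarrow> nat \<Rightarrow> (nat \<Rightarrow> nat \<Rightarrow> real) \<Rightarrow> (nat \<Rightarrow> nat \<Rightarrow> real)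
    \<Rightarrow> (nat \<Rightarrow> nat) \<Rightarrow> nat \<Rightarrow> real" where
  "score p d W V x k = (\<Sum>j<d. V k j * relu (\<Sum>r<p. W j r * real (x r)))"

text \<open>Predictor: Some l if coordinate l strictly exceeds all others; None plays the role of \<bottom>.\<close>
definition predictor :: "nat \<Rightarrow> (nat \<Rightarrow> real) \<Rightarrow> nat option" where
  "predictor p s = (if \<exists>l<p. \<forall>k<p. k \<noteq> l \<longrightarrow> s l > s k
      then Some (THE l. l < p \<and> (\<forall>k<p. k \<noteq> l \<longrightarrow> s l > s k)) else None)"

end

theory Submission
  imports Defs
begin

text \<open>A bias-free ReLU network is positively homogeneous, and the strict-argmax predictor does not
  change when all scores are multiplied by a positive constant. Hence the inputs \<open>m\<^sub>1 e\<^sub>1\<close> and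
  \<open>m\<^sub>2 e\<^sub>1\<close> receive the same prediction as \<open>e\<^sub>1\<close>, although their labels \<open>m\<^sub>1 mod p\<close> and
  \<open>m\<^sub>2 mod p\<close> differ.\<close>

lemma relu_mult_nonneg: "c \<ge> 0 \<Longrightarrow> relu (c * t) = c * relu t"
  unfolding relu_def by (simp add: max_mult_distrib_left)

lemma score_scale: "score p d W V (\<lambda>r. c * x r) k = real c * score p d W V x k"
proof -
  have linear: "(\<Sum>r<p. W j r * real (c * x r)) = real c * (\<Sum>r<p. W j r * real (x r))" for j
    by (simp add: sum_distrib_left mult_ac)
  show ?thesis
    unfolding score_def linear relu_mult_nonneg[OF of_nat_0_le_iff]
    by (simp add: sum_distrib_left mult_ac)
qed

lemma predictor_mult_pos:
  assumes "(c::real) > 0"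
  shows "predictor p (\<lambda>k. c * s k) = predictor p s"
  using assms unfolding predictor_def by (auto simp: mult_less_cancel_left_pos)

lemma predictor_score_scale:
  assumes "c > 0"
  shows "predictor p (score p d W V (\<lambda>r. c * x r)) = predictor p (score p d W V x)"
proof -
  have "score p d W V (\<lambda>r. c * x r) = (\<lambda>k. real c * score p d W V x k)"
    by (rule ext) (rule score_scale)
  then show ?thesis
    using assms by (simp add: predictor_mult_pos)
qed

lemma scaled_unit_in_X_set:
  assumes "i < p"
  shows "(\<lambda>r. m * of_bool (r = i)) \<in> X_set p m"
  using assms unfolding X_set_def by (auto simp: of_bool_def if_distrib sum.delta cong: if_cong)

lemma label_scaled_unit:
  assumes "i < p"
  shows "label p (\<lambda>r. m * of_bool (r = i)) = (i * m) mod p"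
  using assms unfolding label_def by (simp add: of_bool_def if_distrib sum.delta cong: if_cong)

theorem mainTheorem4:
  fixes p m1 m2 :: nat
  assumes "p \<ge> 2" and "m1 \<ge> 1" and "m2 \<ge> 1" and "m1 mod p \<noteq> m2 mod p"
  shows "\<not> (\<exists>(d::nat) (W::nat \<Rightarrow> nat \<Rightarrow> real) (V::nat \<Rightarrow> nat \<Rightarrow> real). d \<ge> 1 \<and>
           (\<forall>x \<in> X_set p m1 \<union> X_set p m2.
              predictor p (score p d W V x) = Some (label p x)))"
proof
  assume "\<exists>(d::nat) (W::nat \<Rightarrow> nat \<Rightarrow> real) (V::nat \<Rightarrow> nat \<Rightarrow> real). d \<ge> 1 \<and>
           (\<forall>x \<in> X_set p m1 \<union> X_set p m2.
              predictor p (score p d W V x) = Some (label p x))"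
  then obtain d W V where correct: "\<forall>x \<in> X_set p m1 \<union> X_set p m2.
              predictor p (score p d W V x) = Some (label p x)" by blast
  define e :: "nat \<Rightarrow> nat" where "e = (\<lambda>r. of_bool (r = 1))"
  have "predictor p (score p d W V e) = Some (m mod p)"
    if "m \<ge> 1" and "m = m1 \<or> m = m2" for m
  proof -
    have "predictor p (score p d W V (\<lambda>r. m * e r)) = Some (m mod p)"
      using correct that scaled_unit_in_X_set[of 1 p m] label_scaled_unit[of 1 p m] \<open>p \<ge> 2\<close>
      unfolding e_def by auto
    then show ?thesis
      using predictor_score_scale[of m] \<open>m \<ge> 1\<close> by simp
  qed
  then have "Some (m1 mod p) = Some (m2 mod p)"
    using \<open>m1 \<ge> 1\<close> \<open>m2 \<ge> 1\<close> by metis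
  then show False
    using \<open>m1 mod p \<noteq> m2 mod p\<close> by simp
qed

end
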